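(* Let $\sigma>0$ and $m\in\mathbb{N}$ with $m\ge\sigma$. Let $Q_m$ be the $L_2(0,1)$-orthogonal projection onto piecewise constant functions on the partition $\Delta_i=[(i-1)/m,i/m)$, $[Q_mx](s)=m\int_{\Delta_i}x(t)\,dt$ for $s\in\Delta_i$, and let $Q_m^\sigma$ be the $\langle\cdot,\cdot\rangle_\sigma$-orthogonal projection onto $\{e^{\sigma\cdot}p: p \text{ piecewise constant on this partition}\}$, i.e. $[Q_m^\sigma x](s)=e^{\sigma s}m\int_{\Delta_i}e^{-\sigma t}x(t)\,dt$ for $s\in\Delta_i$. Then $$\|Q_m-Q_m^\sigma\|_{\sigma\to\sigma}\le\frac{2\sigma}{m}\qquad\text{and}\qquad\|Q_m\|_{\sigma\to\sigma}\le1+\frac{2\sigma}{m}.$$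
   Context: $\langle x,y\rangle_\sigma=\int_0^1e^{-2\sigma t}x(t)y(t)\,dt$, $\|x\|_\sigma=\langle x,x\rangle_\sigma^{1/2}$, and for a linear operator $A$ on $L_2(0,1)$, $\|A\|_{\sigma\to\sigma}=\sup_{x\ne0}\|Ax\|_\sigma/\|x\|_\sigma$. *)

theory Defs
  imports "HOL-Analysis.Analysis"
begin

text \<open>Elements of L2(0,1), represented by Borel measurable real functions
  (values outside [0,1] are irrelevant) that are square integrable on [0,1].\<close>
definition L2_01 :: "(real \<Rightarrow> real) \<Rightarrow> bool" where
  "L2_01 x \<longleftrightarrow> x \<in> borel_measurable lborel \<and>
                set_integrable lborel {0..1} (\<lambda>t. (x t)\<^sup>2)"

definition inner_sigma :: "real \<Rightarrow> (real \<Rightarrow> real) \<Rightarrow> (real \<Rightarrow> real) \<Rightarrow> real" where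
  "inner_sigma \<sigma> x y = (LINT t:{0..1}|lborel. exp (-2*\<sigma>*t) * x t * y t)"

definition norm_sigma :: "real \<Rightarrow> (real \<Rightarrow> real) \<Rightarrow> real" where
  "norm_sigma \<sigma> x = sqrt (inner_sigma \<sigma> x x)"

definition opnorm_sigma :: "real \<Rightarrow> ((real \<Rightarrow> real) \<Rightarrow> (real \<Rightarrow> real)) \<Rightarrow> real" where
  "opnorm_sigma \<sigma> A =
     Sup {norm_sigma \<sigma> (A x) / norm_sigma \<sigma> x | x. L2_01 x \<and> norm_sigma \<sigma> x \<noteq> 0}"

text \<open>Cell \<Delta>_i = [(i-1)/m, i/m), here 0-based: cell k = [k/m, (k+1)/m), k = floor(m s).\<close>
definition cell :: "nat \<Rightarrow> real \<Rightarrow> real set" where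
  "cell m s = (let k = real_of_int (floor (real m * s)) in {k / real m ..< (k + 1) / real m})"

definition Qm :: "nat \<Rightarrow> (real \<Rightarrow> real) \<Rightarrow> (real \<Rightarrow> real)" where
  "Qm m x = (\<lambda>s. if s \<in> {0..<1} then real m * (LINT t:cell m s|lborel. x t) else 0)"

definition Qm_sigma :: "real \<Rightarrow> nat \<Rightarrow> (real \<Rightarrow> real) \<Rightarrow> (real \<Rightarrow> real)" where
  "Qm_sigma \<sigma> m x = (\<lambda>s. if s \<in> {0..<1}
       then exp (\<sigma> * s) * real m * (LINT t:cell m s|lborel. (exp (- \<sigma> * t) * x t)) else 0)"

end

theory Submission
  imports Defs
begin

text \<open>Put y(t) = e^{-\<sigma> t} x(t), so that the weighted norm of x is the L2 norm of y. For s in a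
  cell \<Delta> of length 1/m,
    e^{-\<sigma> s} (Q_m x)(s) = m \<integral>_\<Delta> e^{\<sigma>(t-s)} y(t) dt,
    e^{-\<sigma> s} ((Q_m - Q_m^\<sigma>) x)(s) = m \<integral>_\<Delta> (e^{\<sigma>(t-s)} - 1) y(t) dt,
  and since |t - s| \<le> 1/m the kernels are bounded by K = e^{\<sigma>/m} resp. K = e^{\<sigma>/m} - 1.
  Cauchy-Schwarz on \<Delta> bounds the square of the left-hand side by K^2 (Q_m y^2)(s); integrating
  over [0,1] and using that Q_m preserves integrals yields the operator bound K. Finally
  e^u \<le> 1 + 2u for 0 \<le> u = \<sigma>/m \<le> 1.\<close>

definition grid_cell :: "nat \<Rightarrow> nat \<Rightarrow> real set" where
  "grid_cell m k = {real k / real m ..< (real k + 1) / real m}"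

lemma mem_grid_cell_iff:
  assumes "0 < m"
  shows "s \<in> grid_cell m k \<longleftrightarrow> \<lfloor>real m * s\<rfloor> = int k"
  using assms by (simp add: grid_cell_def floor_eq_iff field_simps)

lemma UN_grid_cell:
  assumes "0 < m"
  shows "(\<Union>k<m. grid_cell m k) = {0..<1}"
proof (rule set_eqI)
  fix s :: real
  have "s \<in> (\<Union>k<m. grid_cell m k) \<longleftrightarrow> (\<exists>k<m. \<lfloor>real m * s\<rfloor> = int k)"
    using mem_grid_cell_iff[OF assms] by blast
  also have "\<dots> \<longleftrightarrow> 0 \<le> \<lfloor>real m * s\<rfloor> \<and> \<lfloor>real m * s\<rfloor> < int m"
    by (metis nat_0_le nat_less_iff of_nat_0_le_iff of_nat_less_iff)
  also have "\<dots> \<longleftrightarrow> 0 \<le> real m * s \<and> real m * s < real m"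
    by (simp add: floor_less_iff)
  also have "\<dots> \<longleftrightarrow> s \<in> {0..<1}"
    using assms by (simp add: zero_le_mult_iff)
  finally show "s \<in> (\<Union>k<m. grid_cell m k) \<longleftrightarrow> s \<in> {0..<1}" .
qed

lemma cell_eq_grid_cell:
  assumes "0 < m" "s \<in> grid_cell m k"
  shows "cell m s = grid_cell m k"
proof -
  have "\<lfloor>real m * s\<rfloor> = int k"
    using assms by (simp add: mem_grid_cell_iff)
  then show ?thesis
    by (simp add: cell_def grid_cell_def Let_def)
qed

lemma obtain_grid_cell:
  assumes "0 < m" "s \<in> {0..<1}"
  obtains k where "k < m" "s \<in> grid_cell m k" "cell m s = grid_cell m k"
  using UN_grid_cell[OF assms(1)] assms(2) cell_eq_grid_cell[OF assms(1)] by blast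

lemma cell_subset_Ico: "0 < m \<Longrightarrow> s \<in> {0..<1} \<Longrightarrow> cell m s \<subseteq> {0..<1}"
  by (metis UN_grid_cell obtain_grid_cell UN_upper lessThan_iff)

lemma abs_diff_le_cell:
  assumes "0 < m" "s \<in> {0..<1}" "t \<in> cell m s"
  shows "\<bar>t - s\<bar> \<le> 1 / real m"
proof -
  obtain k where "s \<in> grid_cell m k" "t \<in> grid_cell m k"
    using obtain_grid_cell[OF assms(1,2)] assms(3) by metis
  then show ?thesis
    using assms(1) by (auto simp: grid_cell_def abs_le_iff field_simps algebra_simps)
qed

lemma sets_cell [measurable]: "cell m s \<in> sets borel"
  by (simp add: cell_def Let_def)

lemma sets_grid_cell [measurable]: "grid_cell m k \<in> sets borel"
  by (simp add: grid_cell_def)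

lemma measure_grid_cell: "0 < m \<Longrightarrow> measure lborel (grid_cell m k) = 1 / real m"
  by (simp add: grid_cell_def divide_right_mono field_simps)

lemma set_integral_sum_grid_cell:
  fixes f :: "real \<Rightarrow> real"
  assumes "0 < m" "\<And>k. k < m \<Longrightarrow> set_integrable lborel (grid_cell m k) f"
  shows "set_integrable lborel {0..<1} f"
    and "(LINT t:{0..<1}|lborel. f t) = (\<Sum>k<m. LINT t:grid_cell m k|lborel. f t)"
proof -
  show "set_integrable lborel {0..<1} f"
    unfolding UN_grid_cell[OF assms(1), symmetric]
    using assms(2) by (intro set_integrable_UN) auto
  have "AE t in lborel. t \<in> grid_cell m k \<and> t \<in> grid_cell m j \<longrightarrow> k = j" for k j
    using assms(1) by (auto simp: mem_grid_cell_iff)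
  then show "(LINT t:{0..<1}|lborel. f t) = (\<Sum>k<m. LINT t:grid_cell m k|lborel. f t)"
    unfolding UN_grid_cell[OF assms(1), symmetric]
    using assms(2) by (intro set_integral_finite_UN_AE) auto
qed

lemma set_integral_Qm:
  fixes f :: "real \<Rightarrow> real"
  assumes "0 < m" "set_integrable lborel {0..<1} f"
  shows "set_integrable lborel {0..<1} (Qm m f)"
    and "(LINT s:{0..<1}|lborel. Qm m f s) = (LINT t:{0..<1}|lborel. f t)"
proof -
  have sub: "grid_cell m k \<subseteq> {0..<1}" if "k < m" for k
    using UN_grid_cell[OF assms(1)] that by blast
  define c where "c k = (LINT t:grid_cell m k|lborel. f t)" for k
  have const: "Qm m f s = real m * c k" if "k < m" "s \<in> grid_cell m k" for k s
  proof -
    have "s \<in> {0..<1}" using sub that by blast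
    then show ?thesis
      using cell_eq_grid_cell[OF assms(1) that(2)] by (simp add: Qm_def c_def)
  qed
  have fin: "emeasure lborel (grid_cell m k) < \<infinity>" for k
    by (simp add: grid_cell_def divide_right_mono)
  have int_cell: "set_integrable lborel (grid_cell m k) (Qm m f)" if "k < m" for k
    using set_integrable_cong[of lborel lborel "grid_cell m k" "grid_cell m k" "Qm m f" "\<lambda>_. real m * c k"]
      const[OF that] fin by (simp add: set_integrable_def grid_cell_def)
  have "(LINT s:grid_cell m k|lborel. Qm m f s) = (LINT t:grid_cell m k|lborel. f t)" if "k < m" for k
  proof -
    have "(LINT s:grid_cell m k|lborel. Qm m f s) = (LINT s:grid_cell m k|lborel. real m * c k)"
      using const[OF that] by (intro set_lebesgue_integral_cong) (auto simp: grid_cell_def)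
    also have "\<dots> = c k"
      using assms(1) fin[of k] by (simp add: set_integral_const less_top measure_grid_cell)
    finally show ?thesis by (simp add: c_def)
  qed
  moreover have "set_integrable lborel (grid_cell m k) f" if "k < m" for k
    using assms(2) _ sub[OF that] by (rule set_integrable_subset) simp
  ultimately show "set_integrable lborel {0..<1} (Qm m f)"
    and "(LINT s:{0..<1}|lborel. Qm m f s) = (LINT t:{0..<1}|lborel. f t)"
    using set_integral_sum_grid_cell[OF assms(1)] int_cell by simp_all
qed

lemma set_integrable_of_square:
  fixes f :: "'a \<Rightarrow> real"
  assumes "A \<in> sets M" "emeasure M A < \<infinity>" "f \<in> borel_measurable M"
    and "set_integrable M A (\<lambda>t. (f t)^2)"
  shows "set_integrable M A f"
proof (rule set_integrable_bound)
  show "set_integrable M A (\<lambda>t. 1 + (f t)^2)"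
    using assms by (intro set_integral_add) (simp_all add: set_integrable_def)
  show "set_borel_measurable M A f"
    using assms by (simp add: set_borel_measurable_def)
  have "\<bar>v\<bar> \<le> 1 + v^2" for v :: real
    using sum_power2_ge_zero[of "\<bar>v\<bar> - 1" 0] by (simp add: power2_eq_square algebra_simps)
  then show "AE t in M. t \<in> A \<longrightarrow> norm (f t) \<le> norm (1 + (f t)^2)"
    by (simp add: add_increasing)
qed

lemma set_integral_square_le:
  fixes f :: "real \<Rightarrow> real"
  assumes "a \<le> b" "set_integrable lborel {a..<b} f" "set_integrable lborel {a..<b} (\<lambda>t. (f t)^2)"
  shows "(LINT t:{a..<b}|lborel. f t)^2 \<le> (b - a) * (LINT t:{a..<b}|lborel. (f t)^2)"
proof (cases "a = b")
  case True
  then show ?thesis by (simp add: set_lebesgue_integral_def)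
next
  case False
  with assms(1) have h: "0 < b - a" by simp
  define I where "I = (LINT t:{a..<b}|lborel. f t)"
  define J where "J = (LINT t:{a..<b}|lborel. (f t)^2)"
  define c where "c = I / (b - a)"
  have "0 \<le> (LINT t:{a..<b}|lborel. (f t - c)^2)"
    unfolding set_lebesgue_integral_def by (rule Bochner_Integration.integral_nonneg) simp
  also have "\<dots> = (LINT t:{a..<b}|lborel. ((f t)^2 - 2 * c * f t) + c^2)"
  proof -
    have "(f t - c)^2 = ((f t)^2 - 2 * c * f t) + c^2" for t
      by (simp add: power2_diff mult_ac)
    then show ?thesis by presburger
  qed
  also have "\<dots> = J - 2 * c * I + c^2 * (b - a)"
  proof -
    have lin: "set_integrable lborel {a..<b} (\<lambda>t. (f t)^2 - 2 * c * f t)"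
      using assms(2,3) by auto
    have const: "set_integrable lborel {a..<b} (\<lambda>_. c^2)"
      using h by (simp add: set_integrable_def)
    show ?thesis
      using assms(2,3) h by (simp add: set_integral_add(2)[OF lin const] set_integral_diff(2)
          set_integral_const I_def J_def)
  qed
  also have "\<dots> = J - I^2 / (b - a)"
  proof -
    have "c^2 * (b - a) = c * I" "c * I = I^2 / (b - a)"
      using h by (simp_all add: c_def power2_eq_square)
    then show ?thesis by simp
  qed
  finally have "I^2 / (b - a) \<le> J"
    by simp
  then show ?thesis
    using h by (simp add: I_def J_def pos_divide_le_eq mult.commute)
qed

lemma set_integral_kernel_square_le:
  fixes \<kappa> y :: "real \<Rightarrow> real"
  assumes "a \<le> b" "\<kappa> \<in> borel_measurable lborel" "y \<in> borel_measurable lborel"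
    and "set_integrable lborel {a..<b} (\<lambda>t. (y t)^2)" "\<And>t. t \<in> {a..<b} \<Longrightarrow> \<bar>\<kappa> t\<bar> \<le> K"
  shows "(LINT t:{a..<b}|lborel. \<kappa> t * y t)^2 \<le> K^2 * (b - a) * (LINT t:{a..<b}|lborel. (y t)^2)"
proof -
  have pointwise: "(\<kappa> t * y t)^2 \<le> K^2 * (y t)^2" if "t \<in> {a..<b}" for t
  proof -
    have "(\<kappa> t)^2 \<le> K^2"
      using power_mono[OF assms(5)[OF that] abs_ge_zero, of 2] by simp
    then show ?thesis
      by (simp add: power_mult_distrib mult_right_mono)
  qed
  have sq: "set_integrable lborel {a..<b} (\<lambda>t. (\<kappa> t * y t)^2)"
  proof (rule set_integrable_bound)
    show "set_integrable lborel {a..<b} (\<lambda>t. K^2 * (y t)^2)"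
      using assms(4) by (rule set_integrable_mult_right)
    show "set_borel_measurable lborel {a..<b} (\<lambda>t. (\<kappa> t * y t)^2)"
      using assms(2,3) by (simp add: set_borel_measurable_def)
    show "AE t in lborel. t \<in> {a..<b} \<longrightarrow> norm ((\<kappa> t * y t)^2) \<le> norm (K^2 * (y t)^2)"
      using pointwise by (intro AE_I2 impI) (simp add: abs_mult)
  qed
  have "set_integrable lborel {a..<b} (\<lambda>t. \<kappa> t * y t)"
  proof (rule set_integrable_of_square[OF _ _ _ sq])
    show "emeasure lborel {a..<b} < \<infinity>"
      using assms(1) by simp
    show "(\<lambda>t. \<kappa> t * y t) \<in> borel_measurable lborel"
      using assms(2,3) by measurable
  qed simp
  then have "(LINT t:{a..<b}|lborel. \<kappa> t * y t)^2 \<le> (b - a) * (LINT t:{a..<b}|lborel. (\<kappa> t * y t)^2)"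
    using set_integral_square_le[OF assms(1) _ sq] by blast
  also have "\<dots> \<le> (b - a) * (LINT t:{a..<b}|lborel. K^2 * (y t)^2)"
    using assms(1,4) sq pointwise by (intro mult_left_mono set_integral_mono) auto
  finally show ?thesis
    by (simp add: mult_ac)
qed

lemma L2_01_set_integrable:
  assumes "L2_01 x" "A \<in> sets lborel" "A \<subseteq> {0..1}"
  shows "set_integrable lborel A x"
proof -
  have "set_integrable lborel {0..1} x"
    using assms(1) set_integrable_of_square[of "{0..1}" lborel x] by (simp add: L2_01_def)
  then show ?thesis
    using assms(2,3) by (rule set_integrable_subset)
qed

lemma L2_01_exp_weight:
  assumes "0 \<le> \<sigma>" "L2_01 x"
  shows "L2_01 (\<lambda>t. exp (- \<sigma> * t) * x t)"
  unfolding L2_01_def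
proof
  have x: "x \<in> borel_measurable lborel" "set_integrable lborel {0..1} (\<lambda>t. (x t)^2)"
    using assms(2) by (auto simp: L2_01_def)
  then show "(\<lambda>t. exp (- \<sigma> * t) * x t) \<in> borel_measurable lborel"
    by measurable
  show "set_integrable lborel {0..1} (\<lambda>t. (exp (- \<sigma> * t) * x t)^2)"
  proof (rule set_integrable_bound[OF x(2)])
    show "set_borel_measurable lborel {0..1} (\<lambda>t. (exp (- \<sigma> * t) * x t)^2)"
      using x(1) by (simp add: set_borel_measurable_def)
    have "(exp (- \<sigma> * t) * x t)^2 \<le> (x t)^2" if "0 \<le> t" for t
    proof -
      have "(exp (- \<sigma> * t))^2 \<le> 1"
        using assms(1) that by (simp add: power_le_one mult_nonneg_nonneg)
      then show ?thesis
        by (simp add: power_mult_distrib mult_left_le_one_le)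
    qed
    then show "AE t in lborel. t \<in> {0..1} \<longrightarrow> norm ((exp (- \<sigma> * t) * x t)^2) \<le> norm ((x t)^2)"
      by auto
  qed
qed

lemma inner_sigma_self: "inner_sigma \<sigma> x x = (LINT t:{0..1}|lborel. (exp (- \<sigma> * t) * x t)^2)"
  unfolding inner_sigma_def by (simp add: power2_eq_square mult_ac exp_add[symmetric])

lemma norm_sigma_nonneg: "0 \<le> norm_sigma \<sigma> x"
  unfolding norm_sigma_def inner_sigma_self set_lebesgue_integral_def
  by (simp add: Bochner_Integration.integral_nonneg)

lemma L2_01_exp: "L2_01 (\<lambda>t. exp (\<sigma> * t))"
  unfolding L2_01_def
  by (auto intro!: borel_integrable_atLeastAtMost' continuous_intros)

lemma norm_sigma_exp: "norm_sigma \<sigma> (\<lambda>t. exp (\<sigma> * t)) = 1"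
  unfolding norm_sigma_def inner_sigma_self by (simp add: exp_add[symmetric] set_integral_const)

lemma opnorm_sigma_le:
  assumes "\<And>x. L2_01 x \<Longrightarrow> norm_sigma \<sigma> (A x) \<le> K * norm_sigma \<sigma> x"
  shows "opnorm_sigma \<sigma> A \<le> K"
  unfolding opnorm_sigma_def
proof (rule cSup_least)
  show "{norm_sigma \<sigma> (A x) / norm_sigma \<sigma> x |x. L2_01 x \<and> norm_sigma \<sigma> x \<noteq> 0} \<noteq> {}"
    using L2_01_exp[of \<sigma>] norm_sigma_exp[of \<sigma>] by force
next
  fix r assume "r \<in> {norm_sigma \<sigma> (A x) / norm_sigma \<sigma> x |x. L2_01 x \<and> norm_sigma \<sigma> x \<noteq> 0}"
  then obtain x where r: "r = norm_sigma \<sigma> (A x) / norm_sigma \<sigma> x"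
    and x: "L2_01 x" "norm_sigma \<sigma> x \<noteq> 0"
    by blast
  have "0 < norm_sigma \<sigma> x"
    using x(2) norm_sigma_nonneg[of \<sigma> x] by linarith
  then show "r \<le> K"
    unfolding r using assms[OF x(1)] by (simp add: pos_divide_le_eq)
qed

text \<open>The weighted norm integrates over [0,1] while cells only cover [0,1); both operators vanish
  at 1 by definition, hence the hypothesis on A 1.\<close>
lemma norm_sigma_le_of_cellwise_bound:
  fixes A x :: "real \<Rightarrow> real"
  assumes "0 \<le> \<sigma>" "0 < m" "L2_01 x" "0 \<le> K" "A 1 = 0"
    and bound: "\<And>s. s \<in> {0..<1} \<Longrightarrow>
      (exp (- \<sigma> * s) * A s)^2 \<le> K^2 * Qm m (\<lambda>t. (exp (- \<sigma> * t) * x t)^2) s"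
  shows "norm_sigma \<sigma> A \<le> K * norm_sigma \<sigma> x"
proof -
  define F where "F = (\<lambda>t. (exp (- \<sigma> * t) * x t)^2)"
  have "x \<in> borel_measurable lborel"
    using assms(3) by (simp add: L2_01_def)
  then have F: "F \<in> borel_measurable lborel" "set_integrable lborel {0..1} F"
    unfolding F_def using L2_01_exp_weight[OF assms(1,3)]
    by (measurable, simp add: L2_01_def)
  have F': "set_integrable lborel {0..<1} F"
    using F(2) by (rule set_integrable_subset) auto
  have "inner_sigma \<sigma> A A = (LINT s:{0..<1}|lborel. (exp (- \<sigma> * s) * A s)^2)"
    unfolding inner_sigma_self set_lebesgue_integral_def
    by (intro Bochner_Integration.integral_cong) (auto simp: indicator_def assms(5))
  also have "\<dots> \<le> (LINT s:{0..<1}|lborel. K^2 * Qm m F s)"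
    unfolding set_lebesgue_integral_def
  proof (rule integral_mono')
    have "set_integrable lborel {0..<1} (\<lambda>s. K^2 * Qm m F s)"
      by (intro set_integrable_mult_right) (rule set_integral_Qm(1)[OF assms(2) F'])
    then show "integrable lborel (\<lambda>s. indicator {0..<1} s *\<^sub>R (K^2 * Qm m F s))"
      by (simp add: set_integrable_def)
  qed (use bound order_trans[OF zero_le_power2 bound] in \<open>auto simp: F_def indicator_def\<close>)
  also have "\<dots> = K^2 * (LINT t:{0..1}|lborel. F t)"
  proof -
    have "AE t in lborel. t \<in> {0..1::real} \<longleftrightarrow> t \<in> {0..<1}"
      using AE_lborel_singleton[of 1] by eventually_elim auto
    then have "(LINT t:{0..<1}|lborel. F t) = (LINT t:{0..1}|lborel. F t)"
      using F(1) by (intro set_integral_cong_set) (simp_all add: set_borel_measurable_def)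
    then show ?thesis
      using set_integral_Qm(2)[OF assms(2) F'] by simp
  qed
  finally have "inner_sigma \<sigma> A A \<le> K^2 * inner_sigma \<sigma> x x"
    by (simp add: inner_sigma_self F_def)
  then have "sqrt (inner_sigma \<sigma> A A) \<le> sqrt (K^2) * sqrt (inner_sigma \<sigma> x x)"
    by (metis real_sqrt_le_mono real_sqrt_mult)
  then show ?thesis
    using assms(4) by (simp add: norm_sigma_def)
qed

lemma cellwise_kernel_bound:
  fixes \<kappa> y :: "real \<Rightarrow> real"
  assumes "0 < m" "s \<in> {0..<1}" "\<kappa> \<in> borel_measurable lborel" "L2_01 y"
    and "\<And>t. t \<in> cell m s \<Longrightarrow> \<bar>\<kappa> t\<bar> \<le> K"
  shows "(real m * (LINT t:cell m s|lborel. \<kappa> t * y t))^2 \<le> K^2 * Qm m (\<lambda>t. (y t)^2) s"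
proof -
  obtain k where k: "k < m" "cell m s = grid_cell m k"
    using obtain_grid_cell[OF assms(1,2)] by metis
  define a where "a = real k / real m"
  define I where "I = (LINT t:cell m s|lborel. \<kappa> t * y t)"
  define J where "J = (LINT t:cell m s|lborel. (y t)^2)"
  have cell: "cell m s = {a..<a + 1 / real m}"
    using k(2) by (simp add: grid_cell_def a_def add_divide_distrib)
  have "cell m s \<subseteq> {0..1}"
    using cell_subset_Ico[OF assms(1,2)] by auto
  then have "set_integrable lborel (cell m s) (\<lambda>t. (y t)^2)"
    using assms(4) unfolding L2_01_def by (auto elim: set_integrable_subset)
  then have "I^2 \<le> K^2 * (1 / real m) * J"
    using set_integral_kernel_square_le[of a "a + 1 / real m" \<kappa> y K] assms(3-5)
    unfolding I_def J_def cell L2_01_def by simp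
  then have bound: "real m * I^2 \<le> K^2 * J"
    using assms(1) by (simp add: pos_le_divide_eq mult.commute)
  have "(real m * I)^2 \<le> K^2 * (real m * J)"
    using mult_left_mono[OF bound, of "real m"] by (simp add: power2_eq_square mult_ac)
  then show ?thesis
    using assms(2) by (simp add: Qm_def I_def J_def)
qed

lemma abs_exp_minus_one_le:
  fixes a h :: real
  assumes "\<bar>a\<bar> \<le> h"
  shows "\<bar>exp a - 1\<bar> \<le> exp h - 1"
proof (cases "0 \<le> a")
  case True
  then show ?thesis
    using assms by simp
next
  case False
  have "1 - exp a \<le> - a" "h \<le> exp h - 1"
    using exp_ge_add_one_self[of a] exp_ge_add_one_self[of h] by linarith+
  then show ?thesis
    using False assms by simp
qed

lemma exp_shift: "exp (\<sigma> * (t - s)) * (exp (- \<sigma> * t) * v) = exp (- \<sigma> * s) * (v :: real)"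
  by (simp add: mult.assoc[symmetric] exp_add[symmetric] algebra_simps)

lemma exp_weighted_Qm:
  assumes "s \<in> {0..<1}"
  shows "exp (- \<sigma> * s) * Qm m x s
    = real m * (LINT t:cell m s|lborel. exp (\<sigma> * (t - s)) * (exp (- \<sigma> * t) * x t))"
proof -
  have "(LINT t:cell m s|lborel. exp (\<sigma> * (t - s)) * (exp (- \<sigma> * t) * x t))
      = (LINT t:cell m s|lborel. exp (- \<sigma> * s) * x t)"
    by (rule set_lebesgue_integral_cong) (simp, intro allI impI exp_shift)
  then show ?thesis
    using assms by (simp add: Qm_def)
qed

lemma exp_weighted_Qm_diff:
  assumes "s \<in> {0..<1}" "set_integrable lborel (cell m s) x"
    and "set_integrable lborel (cell m s) (\<lambda>t. exp (- \<sigma> * t) * x t)"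
  shows "exp (- \<sigma> * s) * (Qm m x s - Qm_sigma \<sigma> m x s)
    = real m * (LINT t:cell m s|lborel. (exp (\<sigma> * (t - s)) - 1) * (exp (- \<sigma> * t) * x t))"
proof -
  define Ix where "Ix = (LINT t:cell m s|lborel. x t)"
  define Iy where "Iy = (LINT t:cell m s|lborel. exp (- \<sigma> * t) * x t)"
  have "(LINT t:cell m s|lborel. (exp (\<sigma> * (t - s)) - 1) * (exp (- \<sigma> * t) * x t))
      = (LINT t:cell m s|lborel. exp (- \<sigma> * s) * x t - exp (- \<sigma> * t) * x t)"
    by (rule set_lebesgue_integral_cong)
      (simp, intro allI impI, simp only: left_diff_distrib exp_shift mult_1_left)
  also have "\<dots> = exp (- \<sigma> * s) * Ix - Iy"
    using assms(2,3) by (simp add: set_integral_diff(2) Ix_def Iy_def)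
  finally have diff: "(LINT t:cell m s|lborel. (exp (\<sigma> * (t - s)) - 1) * (exp (- \<sigma> * t) * x t))
      = exp (- \<sigma> * s) * Ix - Iy" .
  have "exp (- \<sigma> * s) * (Qm m x s - Qm_sigma \<sigma> m x s)
      = exp (- \<sigma> * s) * (real m * Ix - exp (\<sigma> * s) * real m * Iy)"
    using assms(1) by (simp add: Qm_def Qm_sigma_def Ix_def Iy_def)
  also have "\<dots> = real m * (exp (- \<sigma> * s) * Ix - (exp (- \<sigma> * s) * exp (\<sigma> * s)) * Iy)"
    by (simp add: algebra_simps)
  also have "\<dots> = real m * (exp (- \<sigma> * s) * Ix - Iy)"
    by (simp add: exp_add[symmetric])
  finally show ?thesis
    unfolding diff .
qed

lemma abs_kernel_arg_le:
  assumes "0 \<le> \<sigma>" "0 < m" "s \<in> {0..<1}" "t \<in> cell m s"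
  shows "\<bar>\<sigma> * (t - s)\<bar> \<le> \<sigma> / real m"
  using mult_left_mono[OF abs_diff_le_cell[OF assms(2-4)] assms(1)] assms(1)
  by (simp add: abs_mult)

lemma Qm_cellwise_bound:
  assumes "0 \<le> \<sigma>" "0 < m" "L2_01 x" "s \<in> {0..<1}"
  shows "(exp (- \<sigma> * s) * Qm m x s)^2 \<le> (exp (\<sigma> / m))^2 * Qm m (\<lambda>t. (exp (- \<sigma> * t) * x t)^2) s"
  unfolding exp_weighted_Qm[OF assms(4)]
proof (rule cellwise_kernel_bound[OF assms(2,4) _ L2_01_exp_weight[OF assms(1,3)]])
  show "\<bar>exp (\<sigma> * (t - s))\<bar> \<le> exp (\<sigma> / m)" if "t \<in> cell m s" for t
    using abs_kernel_arg_le[OF assms(1,2,4) that] by simp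
qed measurable

lemma Qm_diff_cellwise_bound:
  assumes "0 \<le> \<sigma>" "0 < m" "L2_01 x" "s \<in> {0..<1}"
  shows "(exp (- \<sigma> * s) * (Qm m x s - Qm_sigma \<sigma> m x s))^2
    \<le> (exp (\<sigma> / m) - 1)^2 * Qm m (\<lambda>t. (exp (- \<sigma> * t) * x t)^2) s"
proof -
  have y: "L2_01 (\<lambda>t. exp (- \<sigma> * t) * x t)"
    by (rule L2_01_exp_weight[OF assms(1,3)])
  have cell: "cell m s \<in> sets lborel" "cell m s \<subseteq> {0..1}"
    using cell_subset_Ico[OF assms(2,4)] by auto
  show ?thesis
    unfolding exp_weighted_Qm_diff[OF assms(4) L2_01_set_integrable[OF assms(3) cell]
        L2_01_set_integrable[OF y cell]]
  proof (rule cellwise_kernel_bound[OF assms(2,4) _ y])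
    show "\<bar>exp (\<sigma> * (t - s)) - 1\<bar> \<le> exp (\<sigma> / m) - 1" if "t \<in> cell m s" for t
      by (rule abs_exp_minus_one_le[OF abs_kernel_arg_le[OF assms(1,2,4) that]])
  qed measurable
qed

lemma norm_sigma_Qm_le:
  assumes "0 \<le> \<sigma>" "0 < m" "L2_01 x"
  shows "norm_sigma \<sigma> (Qm m x) \<le> exp (\<sigma> / m) * norm_sigma \<sigma> x"
  using Qm_cellwise_bound[OF assms]
  by (intro norm_sigma_le_of_cellwise_bound[OF assms]) (simp_all add: Qm_def)

lemma norm_sigma_Qm_diff_le:
  assumes "0 \<le> \<sigma>" "0 < m" "L2_01 x"
  shows "norm_sigma \<sigma> (\<lambda>s. Qm m x s - Qm_sigma \<sigma> m x s) \<le> (exp (\<sigma> / m) - 1) * norm_sigma \<sigma> x"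
  using Qm_diff_cellwise_bound[OF assms] assms(1)
  by (intro norm_sigma_le_of_cellwise_bound[OF assms]) (simp_all add: Qm_def Qm_sigma_def)

lemma exp_le_one_plus_double:
  fixes u :: real
  assumes "0 \<le> u" "u \<le> 1"
  shows "exp u \<le> 1 + 2 * u"
proof -
  have "u^2 \<le> u"
    using assms by (simp add: power2_eq_square mult_left_le_one_le)
  then show ?thesis
    using exp_bound[OF assms] by simp
qed

theorem lemma3p1:
  fixes \<sigma> :: real and m :: nat
  assumes "\<sigma> > 0" and "real m \<ge> \<sigma>"
  shows "opnorm_sigma \<sigma> (\<lambda>x s. Qm m x s - Qm_sigma \<sigma> m x s) \<le> 2*\<sigma>/m \<and>
         opnorm_sigma \<sigma> (Qm m) \<le> 1 + 2*\<sigma>/m"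
proof -
  have "0 \<le> \<sigma>" "0 < m"
    using assms by auto
  have exp_le: "exp (\<sigma> / m) \<le> 1 + 2 * \<sigma> / m"
    using exp_le_one_plus_double[of "\<sigma> / m"] assms by simp
  have "norm_sigma \<sigma> (\<lambda>s. Qm m x s - Qm_sigma \<sigma> m x s) \<le> 2 * \<sigma> / m * norm_sigma \<sigma> x"
    if "L2_01 x" for x
    using norm_sigma_Qm_diff_le[OF \<open>0 \<le> \<sigma>\<close> \<open>0 < m\<close> that] exp_le
      mult_right_mono[OF _ norm_sigma_nonneg, of "exp (\<sigma> / m) - 1" "2 * \<sigma> / m" \<sigma> x] by linarith
  moreover have "norm_sigma \<sigma> (Qm m x) \<le> (1 + 2 * \<sigma> / m) * norm_sigma \<sigma> x" if "L2_01 x" for x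
    using norm_sigma_Qm_le[OF \<open>0 \<le> \<sigma>\<close> \<open>0 < m\<close> that] exp_le
      mult_right_mono[OF _ norm_sigma_nonneg, of "exp (\<sigma> / m)" "1 + 2 * \<sigma> / m" \<sigma> x] by linarith
  ultimately show ?thesis
    by (simp add: opnorm_sigma_le)
qed

end
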